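(* Let $d_1,d_2\in\mathbb{N}_+$ and $\boldsymbol\Theta\in[-1,1]^{d_1\times d_2}$. (a) $\max_{\pi\in[-1,1]}\mathrm{srank}(\boldsymbol\Theta-\pi)\le\mathrm{rank}(\boldsymbol\Theta)+1$. (b) If $\boldsymbol\Theta\in\mathcal{M}_{\mathrm{sgn}}(r)$, then $g(\boldsymbol\Theta)/\|g(\boldsymbol\Theta)\|_{\max}\in\mathcal{M}_{\mathrm{sgn}}(r+1)$ for every strictly monotonic function $g:\mathbb{R}\to\mathbb{R}$, where $g(\boldsymbol\Theta)$ denotes entrywise application of $g$. (c) For every dimension $d$, there exists a $d\times d$ matrix $\boldsymbol\Theta\in\mathcal{M}_{\mathrm{sgn}}(2)$ with $\mathrm{rank}(\boldsymbol\Theta)=d$.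
   Context: Sign convention: $\mathrm{sgn}(x)=1$ if $x>0$ and $-1$ otherwise, applied entrywise to matrices; $\boldsymbol\Theta-\pi$ subtracts $\pi$ from every entry. Sign rank: $\mathrm{srank}(\boldsymbol\Theta)=\min\{\mathrm{rank}(\boldsymbol\Theta'):\mathrm{sgn}(\boldsymbol\Theta')=\mathrm{sgn}(\boldsymbol\Theta)\}$. $\|\boldsymbol\Theta\|_{\max}=\max_{i,j}|\Theta_{ij}|$. For $r\in\mathbb{N}_+$, $\mathcal{M}_{\mathrm{sgn}}(r)=\{\boldsymbol\Theta:\max_{\pi\in[-1,1]}\mathrm{srank}(\boldsymbol\Theta-\pi)\le r,\ \|\boldsymbol\Theta\|_{\max}\le1\}$. *)

theory Defs
  imports "HOL-Analysis.Analysis"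
begin

definition sgnp :: "real \<Rightarrow> real" where
  "sgnp x = (if x > 0 then 1 else -1)"

definition msgn :: "real^'n^'m \<Rightarrow> real^'n^'m" where
  "msgn A = (\<chi> i j. sgnp (A $ i $ j))"

definition srank :: "real^'n^'m \<Rightarrow> nat" where
  "srank A = (LEAST k. \<exists>B. msgn B = msgn A \<and> rank B = k)"

definition msub :: "real^'n^'m \<Rightarrow> real \<Rightarrow> real^'n^'m" where
  "msub A p = (\<chi> i j. A $ i $ j - p)"

definition maxnorm :: "real^'n^'m \<Rightarrow> real" where
  "maxnorm A = Max {\<bar>A $ i $ j\<bar> | i j. True}"

definition mapm :: "(real \<Rightarrow> real) \<Rightarrow> real^'n^'m \<Rightarrow> real^'n^'m" where
  "mapm g A = (\<chi> i j. g (A $ i $ j))"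

text \<open>\<open>max_{\<pi>\<in>[-1,1]} srank(\<Theta>-\<pi>) \<le> r\<close> written as a universal bound.\<close>
definition M_sgn :: "nat \<Rightarrow> (real^'n^'m) set" where
  "M_sgn r = {A. (\<forall>p\<in>{-1..1}. srank (msub A p) \<le> r) \<and> maxnorm A \<le> 1}"

end

theory Submission
  imports Defs
begin

text \<open>
  (a) Subtracting \<open>\<pi>\<close> from every entry adds a matrix of rank one.
  (b) For monotone \<open>g\<close>, the entries of \<open>\<Theta>\<close> on which \<open>g(\<Theta>)/c > \<pi>\<close> form an up-set
  or a down-set of the finitely many entry values, so a threshold \<open>t \<in> [-1,1]\<close> makes the
  sign pattern of \<open>g(\<Theta>)/c - \<pi>\<close> equal to that of \<open>\<Theta> - t\<close> or to its negation; negating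
  a sign pattern raises the sign rank by at most one.
  (c) The lower triangular matrix of ones is invertible, and each of its shifts has the
  sign pattern of a constant matrix or of \<open>(i - j + 1/2)\<^sub>i\<^sub>j\<close>, both of rank at most two.
\<close>

lemma rank_uminus:
  fixes A :: "real^'n^'m"
  shows "rank (- A) = rank A"
proof -
  have "(*v) (- A) = (\<lambda>x. A *v (- x))"
    by (simp add: fun_eq_iff vec_eq_iff matrix_vector_mult_def sum_negf)
  then have "range ((*v) (- A)) = (*v) A ` range uminus"
    by (simp only: image_image)
  then show ?thesis by (simp add: rank_dim_range)
qed

lemma rank_add_const_rows_le:
  fixes A :: "real^'n^'m" and v :: "real^'n"
  shows "rank (A + (\<chi> i. v)) \<le> rank A + 1"
proof -
  have "rows (A + (\<chi> i. v)) \<subseteq> span (insert v (rows A))"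
  proof
    fix x assume "x \<in> rows (A + (\<chi> i. v))"
    then obtain i where "x = row i (A + (\<chi> i. v))" by (auto simp: rows_def)
    then have "x = row i A + v" by (simp add: row_def vec_eq_iff)
    moreover have "row i A \<in> span (insert v (rows A))"
      by (rule span_base) (auto simp: rows_def)
    ultimately show "x \<in> span (insert v (rows A))"
      by (simp add: span_add span_base)
  qed
  then have "dim (rows (A + (\<chi> i. v))) \<le> dim (insert v (rows A))"
    by (rule dim_mono)
  also have "\<dots> \<le> dim (rows A) + 1" by (simp add: dim_insert)
  finally show ?thesis by (simp add: row_rank_def)
qed

lemma rank_sum_outer_le_2:
  fixes x :: "'m::finite \<Rightarrow> real" and y :: "'n::finite \<Rightarrow> real"
  shows "rank ((\<chi> i j. x i + y j) :: real^'n^'m) \<le> 2"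
proof -
  have "rank (transpose ((\<chi> j i. x i) :: real^'m^'n)) \<le> 1"
    using rank_add_const_rows_le[of "0 :: real^'m^'n" "\<chi> i. x i"]
    by (simp add: rank_transpose)
  moreover have "(\<chi> i j. x i + y j) = transpose ((\<chi> j i. x i) :: real^'m^'n) + (\<chi> i. \<chi> j. y j)"
    by (simp add: vec_eq_iff transpose_def)
  ultimately show ?thesis
    using rank_add_const_rows_le[of "transpose ((\<chi> j i. x i) :: real^'m^'n)" "\<chi> j. y j"]
    by simp
qed

lemma finite_entries: "finite {f (A$i$j) | i j. True}"
proof -
  have "{f (A$i$j) | i j. True} = (\<lambda>(i, j). f (A$i$j)) ` UNIV" by auto
  then show ?thesis by simp
qed

lemma abs_entry_le_maxnorm: "\<bar>A$i$j\<bar> \<le> maxnorm A"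
  unfolding maxnorm_def using finite_entries[of abs A] by (intro Max_ge) auto

lemma maxnorm_le_iff: "maxnorm A \<le> c \<longleftrightarrow> (\<forall>i j. \<bar>A$i$j\<bar> \<le> c)"
  unfolding maxnorm_def using finite_entries[of abs A] by (subst Max_le_iff) auto

lemma maxnorm_scaleR_inverse_le_1: "maxnorm (inverse (maxnorm A) *\<^sub>R A) \<le> 1"
proof (cases "maxnorm A = 0")
  case False
  then have "maxnorm A > 0"
    using abs_entry_le_maxnorm[of A] by (metis abs_ge_zero order.trans less_eq_real_def)
  then show ?thesis
    using abs_entry_le_maxnorm[of A]
    by (auto simp: maxnorm_le_iff abs_mult field_simps)
qed (simp add: maxnorm_le_iff)

lemma msgn_eq_iff: "msgn A = msgn B \<longleftrightarrow> (\<forall>i j. 0 < A$i$j \<longleftrightarrow> 0 < B$i$j)"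
  by (auto simp: msgn_def sgnp_def vec_eq_iff split: if_splits)

lemma msgn_eq_uminus_iff: "msgn A = - msgn B \<longleftrightarrow> (\<forall>i j. 0 < A$i$j \<longleftrightarrow> \<not> 0 < B$i$j)"
  by (auto simp: msgn_def sgnp_def vec_eq_iff split: if_splits)

lemma srank_le_rank: "msgn B = msgn A \<Longrightarrow> srank A \<le> rank B"
  unfolding srank_def by (rule Least_le) auto

lemma srank_witness:
  obtains B where "msgn B = msgn A" "rank B = srank A"
proof -
  have "\<exists>B. msgn B = msgn A \<and> rank B = srank A"
    unfolding srank_def by (rule LeastI_ex) auto
  then show thesis using that by blast
qed

lemma srank_cong: "msgn A = msgn B \<Longrightarrow> srank A = srank B"
  by (simp add: srank_def)

lemma exists_pos_below_positives:
  fixes S :: "real set"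
  assumes "finite S"
  shows "\<exists>e>0. \<forall>x\<in>S. 0 < x \<longrightarrow> e < x"
proof -
  define m where "m = Min (insert 1 {x\<in>S. 0 < x})"
  have "m > 0" using assms by (simp add: m_def)
  moreover have "m \<le> x" if "x \<in> S" "0 < x" for x
    using assms that by (simp add: m_def)
  ultimately show ?thesis by (intro exI[of _ "m / 2"]) force
qed

text \<open>If \<open>B\<close> realises a sign pattern, then \<open>e - B\<close> realises its negation as soon as
  \<open>0 < e\<close> lies below every positive entry of \<open>B\<close>.\<close>
lemma srank_msgn_uminus_le:
  assumes "msgn A' = - msgn A"
  shows "srank A' \<le> srank A + 1"
proof -
  obtain B where B: "msgn B = msgn A" "rank B = srank A" by (rule srank_witness)
  obtain e where "e > 0" and e: "\<And>i j. 0 < B$i$j \<Longrightarrow> e < B$i$j"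
    using exists_pos_below_positives[OF finite_entries[of "\<lambda>x. x" B]] by blast
  define C where "C = - B + (\<chi> i. \<chi> j. e)"
  have "msgn C = - msgn B"
    unfolding msgn_eq_uminus_iff C_def using \<open>e > 0\<close> e by (force simp: not_less)
  then have "srank A' \<le> rank C"
    using assms B(1) by (intro srank_le_rank) simp
  also have "\<dots> \<le> rank B + 1"
    using rank_add_const_rows_le[of "- B" "\<chi> j. e"] by (simp add: C_def rank_uminus)
  finally show ?thesis using B(2) by simp
qed

lemma srank_msub_le_rank_add_1:
  fixes \<Theta> :: "real^'n^'m"
  shows "srank (msub \<Theta> p) \<le> rank \<Theta> + 1"
proof -
  have "msub \<Theta> p = \<Theta> + (\<chi> i. \<chi> j. - p)"
    by (simp add: msub_def vec_eq_iff)
  then show ?thesis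
    using srank_le_rank[OF refl, of "msub \<Theta> p"] rank_add_const_rows_le[of \<Theta> "\<chi> j. - p"]
    by simp
qed

lemma mono_on_threshold:
  fixes E :: "real set" and P :: "real \<Rightarrow> bool"
  assumes "finite E" "E \<subseteq> {a..b}" "a \<le> b" and mono: "mono_on E P"
  shows "\<exists>t\<in>{a..b}. (\<forall>x\<in>E. P x \<longleftrightarrow> t < x) \<or> (\<forall>x\<in>E. P x \<longleftrightarrow> x \<le> t)"
proof (cases "\<forall>x\<in>E. P x")
  case True
  then show ?thesis using assms by (intro bexI[of _ b]) auto
next
  case False
  define t where "t = Max {x\<in>E. \<not> P x}"
  have t: "t \<in> E" "\<not> P t" and le_t: "\<And>x. x \<in> E \<Longrightarrow> \<not> P x \<Longrightarrow> x \<le> t"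
    using Max_in[of "{x\<in>E. \<not> P x}"] Max_ge[of "{x\<in>E. \<not> P x}"] False \<open>finite E\<close>
    by (auto simp: t_def)
  have "P x \<longleftrightarrow> t < x" if "x \<in> E" for x
  proof
    assume "P x"
    show "t < x"
    proof (rule ccontr)
      assume "\<not> t < x"
      then have "P x \<le> P t" using mono_onD[OF mono that t(1)] by simp
      with \<open>P x\<close> t(2) show False by simp
    qed
  qed (use le_t[OF that] in force)
  then show ?thesis using t(1) assms(2) by blast
qed

lemma monotone_threshold:
  fixes E :: "real set" and P :: "real \<Rightarrow> bool"
  assumes "finite E" "E \<subseteq> {a..b}" "a \<le> b" "mono_on E P \<or> mono_on E (\<lambda>x. \<not> P x)"
  shows "\<exists>t\<in>{a..b}. (\<forall>x\<in>E. P x \<longleftrightarrow> t < x) \<or> (\<forall>x\<in>E. P x \<longleftrightarrow> x \<le> t)"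
  using assms(4)
proof
  assume "mono_on E (\<lambda>x. \<not> P x)"
  from mono_on_threshold[OF assms(1-3) this] obtain t where "t \<in> {a..b}"
    "(\<forall>x\<in>E. \<not> P x \<longleftrightarrow> t < x) \<or> (\<forall>x\<in>E. \<not> P x \<longleftrightarrow> x \<le> t)" by blast
  then show ?thesis by (metis not_less)
qed (rule mono_on_threshold[OF assms(1-3)])

lemma srank_msub_mapm_le:
  fixes \<Theta> :: "real^'n^'m"
  assumes "maxnorm \<Theta> \<le> 1" and h: "mono h \<or> antimono h"
  obtains t where "t \<in> {-1..1}" "srank (msub (mapm h \<Theta>) p) \<le> srank (msub \<Theta> t) + 1"
proof -
  define E where "E = {\<Theta>$i$j | i j. True}"
  define P where "P x \<longleftrightarrow> p < h x" for x
  have "finite E"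
    using finite_entries[of "\<lambda>x. x" \<Theta>] by (simp add: E_def)
  moreover have "E \<subseteq> {-1..1}"
    using assms(1) by (auto simp: E_def maxnorm_le_iff abs_le_iff)
  moreover from h have "mono_on E P \<or> mono_on E (\<lambda>x. \<not> P x)"
  proof
    assume "mono h"
    then have "mono_on E P"
      unfolding P_def
      by (intro mono_onI) (auto simp: le_bool_def dest: monoD[of h] intro: less_le_trans)
    then show ?thesis ..
  next
    assume "antimono h"
    then have "mono_on E (\<lambda>x. \<not> P x)"
      unfolding P_def
      by (intro mono_onI) (auto simp: le_bool_def not_less dest: antimonoD[of h] intro: order.trans)
    then show ?thesis ..
  qed
  ultimately obtain t where t: "t \<in> {-1..1}"
    and sep: "(\<forall>x\<in>E. P x \<longleftrightarrow> t < x) \<or> (\<forall>x\<in>E. P x \<longleftrightarrow> x \<le> t)"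
    using monotone_threshold[of E "-1" 1 P] by auto
  have entry: "0 < msub (mapm h \<Theta>) p $ i $ j \<longleftrightarrow> P (\<Theta>$i$j)"
    "0 < msub \<Theta> t $ i $ j \<longleftrightarrow> t < \<Theta>$i$j" for i j
    by (simp_all add: msub_def mapm_def P_def)
  have "\<Theta>$i$j \<in> E" for i j by (auto simp: E_def)
  with sep have "srank (msub (mapm h \<Theta>) p) \<le> srank (msub \<Theta> t) + 1"
  proof (elim disjE)
    assume "\<forall>x\<in>E. P x \<longleftrightarrow> t < x"
    with \<open>\<And>i j. \<Theta>$i$j \<in> E\<close> have "msgn (msub (mapm h \<Theta>) p) = msgn (msub \<Theta> t)"
      by (simp add: msgn_eq_iff entry)
    then have "srank (msub (mapm h \<Theta>) p) = srank (msub \<Theta> t)" by (rule srank_cong)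
    then show ?thesis by simp
  next
    assume "\<forall>x\<in>E. P x \<longleftrightarrow> x \<le> t"
    with \<open>\<And>i j. \<Theta>$i$j \<in> E\<close> have "msgn (msub (mapm h \<Theta>) p) = - msgn (msub \<Theta> t)"
      by (simp add: msgn_eq_uminus_iff entry not_less)
    then show ?thesis by (rule srank_msgn_uminus_le)
  qed
  with t that show thesis by blast
qed

lemma mapm_mem_M_sgn_Suc:
  fixes \<Theta> :: "real^'n^'m"
  assumes "\<Theta> \<in> M_sgn r" "mono h \<or> antimono h" "maxnorm (mapm h \<Theta>) \<le> 1"
  shows "mapm h \<Theta> \<in> M_sgn (r + 1)"
proof -
  have "srank (msub (mapm h \<Theta>) p) \<le> r + 1" for p
  proof -
    obtain t where "t \<in> {-1..1}" "srank (msub (mapm h \<Theta>) p) \<le> srank (msub \<Theta> t) + 1"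
      using assms(1,2) srank_msub_mapm_le[of \<Theta> h p] by (auto simp: M_sgn_def)
    then show ?thesis using assms(1) by (force simp: M_sgn_def)
  qed
  then show ?thesis using assms(3) by (simp add: M_sgn_def)
qed

lemma normalized_mapm_mem_M_sgn_Suc:
  fixes \<Theta> :: "real^'n^'m"
  assumes "\<Theta> \<in> M_sgn r" and g: "mono g \<or> antimono g"
  shows "inverse (maxnorm (mapm g \<Theta>)) *\<^sub>R mapm g \<Theta> \<in> M_sgn (r + 1)"
proof -
  define c where "c = inverse (maxnorm (mapm g \<Theta>))"
  have "maxnorm (mapm g \<Theta>) \<ge> 0"
    using abs_entry_le_maxnorm[of "mapm g \<Theta>"] by (metis abs_ge_zero order.trans)
  then have "c \<ge> 0" by (simp add: c_def)
  from g have "mono (\<lambda>x. c * g x) \<or> antimono (\<lambda>x. c * g x)"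
  proof
    assume "mono g"
    then have "mono (\<lambda>x. c * g x)"
      using \<open>c \<ge> 0\<close> by (intro monoI mult_left_mono) (auto dest: monoD)
    then show ?thesis ..
  next
    assume "antimono g"
    then have "antimono (\<lambda>x. c * g x)"
      using \<open>c \<ge> 0\<close> by (intro antimonoI mult_left_mono) (auto dest: antimonoD)
    then show ?thesis ..
  qed
  moreover have "c *\<^sub>R mapm g \<Theta> = mapm (\<lambda>x. c * g x) \<Theta>"
    by (simp add: mapm_def vec_eq_iff)
  ultimately show ?thesis
    using mapm_mem_M_sgn_Suc[OF assms(1)] maxnorm_scaleR_inverse_le_1[of "mapm g \<Theta>"]
    by (simp add: c_def)
qed

lemma srank_le_2_of_sign_sum:
  fixes M :: "real^'n^'m" and x :: "'m \<Rightarrow> real" and y :: "'n \<Rightarrow> real"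
  assumes "\<And>i j. 0 < M$i$j \<longleftrightarrow> 0 < x i + y j"
  shows "srank M \<le> 2"
proof -
  have "msgn (\<chi> i j. x i + y j) = msgn M"
    using assms by (simp add: msgn_eq_iff)
  then have "srank M \<le> rank ((\<chi> i j. x i + y j) :: real^'n^'m)"
    by (rule srank_le_rank)
  with rank_sum_outer_le_2[of x y] show ?thesis by linarith
qed

text \<open>The index type carries no order; \<open>f\<close> numbers the indices.\<close>
definition lower_ones_matrix :: "('d \<Rightarrow> nat) \<Rightarrow> real^'d^'d" where
  "lower_ones_matrix f = (\<chi> i j. if f j \<le> f i then 1 else 0)"

lemma rank_lower_ones_matrix:
  fixes f :: "'d::finite \<Rightarrow> nat"
  assumes "inj f"
  shows "rank (lower_ones_matrix f) = CARD('d)"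
proof -
  have "x = 0" if "lower_ones_matrix f *v x = 0" for x
  proof (rule ccontr)
    assume "x \<noteq> 0"
    then obtain i where "x$i \<noteq> 0" and least: "\<And>j. x$j \<noteq> 0 \<Longrightarrow> f i \<le> f j"
      using ex_has_least_nat[of "\<lambda>i. x$i \<noteq> 0" _ f] by (metis vec_eq_iff zero_index)
    have below: "x$j = 0" if "f j \<le> f i" "j \<noteq> i" for j
      using least[of j] that \<open>inj f\<close> by (metis inj_eq le_antisym)
    have "(lower_ones_matrix f *v x)$i = (\<Sum>j\<in>UNIV. (if f j \<le> f i then 1 else 0) * x$j)"
      by (simp add: matrix_vector_mult_def lower_ones_matrix_def)
    also have "\<dots> = (\<Sum>j\<in>UNIV. if j = i then x$i else 0)"
      by (rule sum.cong) (auto simp: below)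
    also have "\<dots> = x$i" by simp
    finally show False using \<open>x$i \<noteq> 0\<close> that by simp
  qed
  then show ?thesis
    using matrix_nonfull_linear_equations_eq by blast
qed

lemma srank_msub_lower_ones_matrix_le_2: "srank (msub (lower_ones_matrix f) p) \<le> 2"
proof -
  have entry: "msub (lower_ones_matrix f) p $ i $ j = (if f j \<le> f i then 1 else 0) - p" for i j
    by (simp add: msub_def lower_ones_matrix_def)
  consider "p < 0" | "0 \<le> p" "p < 1" | "1 \<le> p" by linarith
  then show ?thesis
  proof cases
    case 1
    then show ?thesis by (intro srank_le_2_of_sign_sum[of _ "\<lambda>_. 1" "\<lambda>_. 0"]) (simp add: entry)
  next
    case 2
    have "f j \<le> f i \<longleftrightarrow> 0 < real (f i) + 1/2 - real (f j)" for i j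
      by (cases "f j \<le> f i") auto
    with 2 show ?thesis
      by (intro srank_le_2_of_sign_sum[of _ "\<lambda>i. real (f i) + 1/2" "\<lambda>j. - real (f j)"])
        (simp add: entry)
  next
    case 3
    then show ?thesis by (intro srank_le_2_of_sign_sum[of _ "\<lambda>_. -1" "\<lambda>_. 0"]) (simp add: entry)
  qed
qed

lemma lower_ones_matrix_mem_M_sgn_2: "lower_ones_matrix f \<in> M_sgn 2"
  using srank_msub_lower_ones_matrix_le_2[of f]
  by (simp add: M_sgn_def maxnorm_le_iff lower_ones_matrix_def)

lemma exists_full_rank_mem_M_sgn_2: "\<exists>A :: real^'d^'d. A \<in> M_sgn 2 \<and> rank A = CARD('d)"
proof -
  obtain f :: "'d \<Rightarrow> nat" where "inj f"
    using finite_imp_inj_to_nat_seg[of "UNIV :: 'd set"] by auto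
  then show ?thesis
    using lower_ones_matrix_mem_M_sgn_2 rank_lower_ones_matrix by blast
qed

theorem proposition2:
  fixes \<Theta> :: "real^'n^'m"
  shows "(maxnorm \<Theta> \<le> 1 \<longrightarrow> (\<forall>p\<in>{-1..1}. srank (msub \<Theta> p) \<le> rank \<Theta> + 1))
    \<and> (\<forall>(r::nat) (g::real \<Rightarrow> real). r \<ge> 1 \<longrightarrow> \<Theta> \<in> M_sgn r \<longrightarrow>
          ((\<forall>x y. x < y \<longrightarrow> g x < g y) \<or> (\<forall>x y. x < y \<longrightarrow> g y < g x)) \<longrightarrow>
          (inverse (maxnorm (mapm g \<Theta>))) *\<^sub>R mapm g \<Theta> \<in> M_sgn (r + 1))
    \<and> (\<exists>A :: real^'d^'d. A \<in> M_sgn 2 \<and> rank A = CARD('d))"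
proof -
  have "mono g" if "\<forall>x y. x < y \<longrightarrow> g x < g y" for g :: "real \<Rightarrow> real"
    using that strict_mono_mono unfolding strict_mono_def by blast
  moreover have "antimono g" if "\<forall>x y. x < y \<longrightarrow> g y < g x" for g :: "real \<Rightarrow> real"
    using that by (intro antimonoI) (auto simp: le_less)
  ultimately show ?thesis
    using srank_msub_le_rank_add_1 normalized_mapm_mem_M_sgn_Suc exists_full_rank_mem_M_sgn_2
    by blast
qed

end
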